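(* For every contractor network and every $t\ge2$, $$\|\mathbf m^t-\mathbf m\|\le\Big(1+\frac{2}{1-\|(\mathbf A\mathbf W)^2\|}\Big)\,\|\mathbf r\|\,\|(\mathbf A\mathbf W)^2\|^{\lfloor t/2\rfloor}.$$ Moreover, if $G$ is acyclic (contains no directed cycle, including no self-loop) and $d>0$ denotes the maximum number of edges in a directed path of $G$, then $m_i^t=m_i$ for all $t\ge d$ and all $i\in\mathcal V$.
   Context: A contractor network is a finite directed graph $G=(\mathcal V,\mathcal E)$ with $n=|\mathcal V|$ nodes, without multiple edges (self-loops and directed cycles are allowed in general), in which every node has at least one incident edge. For $i\in\mathcal V$ let $\delta_{\mathrm{in}}(i)=\{j:(j,i)\in\mathcal E\}$ and $\delta_{\mathrm{out}}(i)=\{k:(i,k)\in\mathcal E\}$. A node $i$ is a pure principal if $\delta_{\mathrm{in}}(i)=\emptyset$, a pure obligee if $\delta_{\mathrm{out}}(i)=\emptyset$, and an intermediary otherwise. Each edge $(j,i)\in\mathcal E$ carries a weight $w_{ij}>0$; set $w_{ij}=0$ if $(j,i)\notin\mathcal E$; for every node $i$ with $\delta_{\mathrm{in}}(i)\neq\emptyset$ we have $\sum_{j\in\delta_{\mathrm{in}}(i)}w_{ij}=1$. Let $\mathbf W=(w_{ij})$. Each node has a risk score $r_i$, with $r_i\in(0,1)$ if $i$ is not a pure obligee and $r_i=0$ if $i$ is a pure obligee; $\mathbf r=(r_i)_i$. Propagation parameters: $\alpha_i=0$ for pure principals, $\alpha_i=1$ for pure obligees, $\alpha_i\in(0,1)$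 for intermediaries; $\mathbf A=\mathrm{diag}(\alpha_i)$. The mean failure probabilities are defined by $\mathbf m^0=\mathbf r$ and $\mathbf m^{t+1}=(\mathbf I-\mathbf A)\mathbf r+\mathbf A\mathbf W\mathbf m^t$ (these are $m_i^t=\mathbb E[X_i^t]$ for the failure process where the $X_i^0\sim\mathrm{Bernoulli}(r_i)$ are independent and, conditionally on the past, $X_i^{t+1}\sim\mathrm{Bernoulli}((1-\alpha_i)r_i+\alpha_i\sum_j w_{ij}X_j^t)$ independently over $i$), and $\mathbf m=\lim_t\mathbf m^t=(\mathbf I-\mathbf A\mathbf W)^{-1}(\mathbf I-\mathbf A)\mathbf r$. Norms: $\|\mathbf x\|=\max_i|x_i|$ for vectors and $\|\mathbf M\|$ = induced $\ell_\infty$ norm (maximum absolute row sum) for matrices. *)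

theory Defs
  imports "HOL-Analysis.Analysis"
begin

text \<open>Nodes are the elements of a finite type 'n. An edge from j to i is the pair (j,i) in E.
  Weights: W $ i $ j = w_ij. Infinity norms are defined explicitly (max abs / max abs row sum).\<close>

definition vnorm_inf :: "real ^ 'n \<Rightarrow> real" where
  "vnorm_inf x = Max (range (\<lambda>i. \<bar>x $ i\<bar>))"

definition mnorm_inf :: "real ^ 'n ^ 'm \<Rightarrow> real" where
  "mnorm_inf M = Max (range (\<lambda>i. \<Sum>j\<in>UNIV. \<bar>M $ i $ j\<bar>))"

definition diag_mat :: "real ^ 'n \<Rightarrow> real ^ 'n ^ 'n" where
  "diag_mat a = (\<chi> i j. if i = j then a $ i else 0)"

primrec mean_fail :: "real ^ 'n ^ 'n \<Rightarrow> real ^ 'n ^ 'n \<Rightarrow> real ^ 'n \<Rightarrow> nat \<Rightarrow> real ^ 'n" where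
  "mean_fail A W r 0 = r"
| "mean_fail A W r (Suc t) = (mat 1 - A) *v r + (A ** W) *v mean_fail A W r t"

definition contractor_network ::
  "('n::finite \<times> 'n) set \<Rightarrow> real ^ 'n ^ 'n \<Rightarrow> real ^ 'n \<Rightarrow> real ^ 'n \<Rightarrow> bool" where
  "contractor_network E W r \<alpha> \<longleftrightarrow>
     (\<forall>i. \<exists>j. (j, i) \<in> E \<or> (i, j) \<in> E) \<and>
     (\<forall>i j. (j, i) \<in> E \<longrightarrow> W $ i $ j > 0) \<and>
     (\<forall>i j. (j, i) \<notin> E \<longrightarrow> W $ i $ j = 0) \<and>
     (\<forall>i. (\<exists>j. (j, i) \<in> E) \<longrightarrow> (\<Sum>j\<in>UNIV. W $ i $ j) = 1) \<and>
     (\<forall>i. (\<exists>k. (i, k) \<in> E) \<longrightarrow> 0 < r $ i \<and> r $ i < 1) \<and>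
     (\<forall>i. (\<nexists>k. (i, k) \<in> E) \<longrightarrow> r $ i = 0) \<and>
     (\<forall>i. (\<nexists>j. (j, i) \<in> E) \<longrightarrow> \<alpha> $ i = 0) \<and>
     (\<forall>i. (\<nexists>k. (i, k) \<in> E) \<longrightarrow> \<alpha> $ i = 1) \<and>
     (\<forall>i. (\<exists>j. (j, i) \<in> E) \<and> (\<exists>k. (i, k) \<in> E) \<longrightarrow> 0 < \<alpha> $ i \<and> \<alpha> $ i < 1)"

definition acyclic_graph :: "('n \<times> 'n) set \<Rightarrow> bool" where
  "acyclic_graph E \<longleftrightarrow> (\<forall>i. (i, i) \<notin> E\<^sup>+)"

definition is_dpath :: "('n \<times> 'n) set \<Rightarrow> 'n list \<Rightarrow> bool" where
  "is_dpath E p \<longleftrightarrow> p \<noteq> [] \<and> (\<forall>k. Suc k < length p \<longrightarrow> (p ! k, p ! Suc k) \<in> E)"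

definition max_path_edges :: "('n \<times> 'n) set \<Rightarrow> nat" where
  "max_path_edges E = Max {length p - 1 | p. is_dpath E p}"

end

theory Submission
  imports Defs
begin

(*
  Write B = A W and c = (I - A) r, so that m^(t+1) = c + B m^t.  Row i of |B| sums to
  \<alpha>_i \<le> 1, and row i of B^2 sums to \<Sum>_k B_ik \<alpha>_k, which is below 1 because every
  in-neighbour of a pure obligee has an out-edge.  Hence q = \<parallel>B^2\<parallel> < 1, I - B is invertible,
  m = c + B m, and the error m^t - m = B^t (r - m) shrinks by q every two steps, while
  m = c + B c + B^2 m gives \<parallel>m\<parallel> \<le> 2 \<parallel>r\<parallel> / (1 - q).
  For acyclic G, node i only sees the iterates of its in-neighbours, so by induction on the
  number of nodes of the longest path ending in i the iteration is constant from step d on;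
  a constant iterate is a fixed point, hence equals m.
*)

lemma vnorm_inf_ge: "\<bar>x $ i\<bar> \<le> vnorm_inf x"
  unfolding vnorm_inf_def by (rule Max_ge) auto

lemma vnorm_inf_le: "(\<And>i. \<bar>x $ i\<bar> \<le> c) \<Longrightarrow> vnorm_inf (x::real^'n) \<le> c"
  unfolding vnorm_inf_def by (subst Max_le_iff) auto

lemma vnorm_inf_nonneg: "0 \<le> vnorm_inf x"
  using vnorm_inf_ge[of x] abs_ge_zero order_trans by blast

lemma vnorm_inf_eq_0_iff: "vnorm_inf (x::real^'n) = 0 \<longleftrightarrow> x = 0"
proof
  assume "vnorm_inf x = 0"
  then show "x = 0"
    using vnorm_inf_ge[of x] by (simp add: vec_eq_iff)
qed (simp add: vnorm_inf_def)

lemma vnorm_inf_add_le: "vnorm_inf (x + y) \<le> vnorm_inf x + vnorm_inf (y::real^'n)"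
  by (rule vnorm_inf_le) (smt (verit) vector_add_component vnorm_inf_ge)

lemma vnorm_inf_diff_le: "vnorm_inf (x - y) \<le> vnorm_inf x + vnorm_inf (y::real^'n)"
  by (rule vnorm_inf_le) (smt (verit) vector_minus_component vnorm_inf_ge)

lemma mnorm_inf_ge: "(\<Sum>j\<in>UNIV. \<bar>M $ i $ j\<bar>) \<le> mnorm_inf (M::real^'n^'m)"
  unfolding mnorm_inf_def by (rule Max_ge) auto

lemma mnorm_inf_le: "(\<And>i. (\<Sum>j\<in>UNIV. \<bar>M $ i $ j\<bar>) \<le> c) \<Longrightarrow> mnorm_inf (M::real^'n^'m) \<le> c"
  unfolding mnorm_inf_def by (subst Max_le_iff) auto

lemma mnorm_inf_less: "(\<And>i. (\<Sum>j\<in>UNIV. \<bar>M $ i $ j\<bar>) < c) \<Longrightarrow> mnorm_inf (M::real^'n^'m) < c"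
  unfolding mnorm_inf_def by (subst Max_less_iff) auto

lemma mnorm_inf_nonneg: "0 \<le> mnorm_inf (M::real^'n^'m)"
  by (rule order_trans[OF sum_nonneg mnorm_inf_ge]) simp_all

lemma vnorm_inf_matrix_vector_mult_le:
  "vnorm_inf ((M::real^'n^'m) *v x) \<le> mnorm_inf M * vnorm_inf x"
proof (rule vnorm_inf_le)
  fix i
  have "\<bar>(M *v x) $ i\<bar> = \<bar>\<Sum>j\<in>UNIV. M $ i $ j * x $ j\<bar>"
    by (simp add: matrix_vector_mult_def)
  also have "\<dots> \<le> (\<Sum>j\<in>UNIV. \<bar>M $ i $ j\<bar> * \<bar>x $ j\<bar>)"
    by (rule order_trans[OF sum_abs]) (simp add: abs_mult)
  also have "\<dots> \<le> (\<Sum>j\<in>UNIV. \<bar>M $ i $ j\<bar> * vnorm_inf x)"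
    by (rule sum_mono) (simp add: mult_left_mono vnorm_inf_ge)
  also have "\<dots> = (\<Sum>j\<in>UNIV. \<bar>M $ i $ j\<bar>) * vnorm_inf x"
    by (simp add: sum_distrib_right)
  also have "\<dots> \<le> mnorm_inf M * vnorm_inf x"
    by (rule mult_right_mono[OF mnorm_inf_ge vnorm_inf_nonneg])
  finally show "\<bar>(M *v x) $ i\<bar> \<le> mnorm_inf M * vnorm_inf x" .
qed

lemma matrix_inv_left:
  fixes M :: "'a::field^'n^'n"
  assumes "invertible M"
  shows "matrix_inv M ** M = mat 1"
  using someI_ex[OF assms[unfolded invertible_def]] unfolding matrix_inv_def by auto

lemma matrix_inv_right:
  fixes M :: "'a::field^'n^'n"
  assumes "invertible M"
  shows "M ** matrix_inv M = mat 1"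
  using someI_ex[OF assms[unfolded invertible_def]] unfolding matrix_inv_def by auto

lemma invertible_one_minus_if_mnorm_inf_square_less_1:
  fixes B :: "real^'n^'n"
  assumes "mnorm_inf (B ** B) < 1"
  shows "invertible (mat 1 - B)"
proof -
  have "x = 0" if "(mat 1 - B) *v x = 0" for x
  proof -
    have "x = B *v x"
      using that by (simp add: matrix_vector_mult_diff_rdistrib)
    then have "x = (B ** B) *v x"
      by (metis matrix_vector_mul_assoc)
    then have "vnorm_inf x \<le> mnorm_inf (B ** B) * vnorm_inf x"
      by (metis vnorm_inf_matrix_vector_mult_le)
    then have "vnorm_inf x = 0"
      using assms vnorm_inf_nonneg[of x] by (smt (verit) mult_less_cancel_right2)
    then show "x = 0"
      by (simp add: vnorm_inf_eq_0_iff)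
  qed
  then show ?thesis
    using matrix_left_invertible_ker invertible_left_inverse by blast
qed

lemma affine_fixed_point:
  fixes B :: "real^'n^'n"
  assumes "invertible (mat 1 - B)"
  shows "v = c + B *v v \<longleftrightarrow> v = matrix_inv (mat 1 - B) *v c"
proof -
  have "v = c + B *v v \<longleftrightarrow> (mat 1 - B) *v v = c"
    by (auto simp: matrix_vector_mult_diff_rdistrib algebra_simps)
  also have "\<dots> \<longleftrightarrow> v = matrix_inv (mat 1 - B) *v c"
    using matrix_inv_left[OF assms] matrix_inv_right[OF assms]
    by (metis matrix_vector_mul_assoc matrix_vector_mul_lid)
  finally show ?thesis .
qed

lemma affine_iteration_error_bound:
  fixes B :: "real^'n^'n"
  assumes x_Suc: "\<And>t. x (Suc t) = c + B *v x t"
    and fixed: "m = c + B *v m"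
    and B_le: "mnorm_inf B \<le> 1"
  shows "vnorm_inf (x t - m) \<le> mnorm_inf (B ** B) ^ (t div 2) * vnorm_inf (x 0 - m)"
proof -
  define q where "q = mnorm_inf (B ** B)"
  have err_Suc: "x (Suc t) - m = B *v (x t - m)" for t
    using x_Suc fixed by (metis add_diff_cancel_left matrix_vector_mult_diff_distrib)
  have err_Suc_le: "vnorm_inf (x (Suc t) - m) \<le> vnorm_inf (x t - m)" for t
    unfolding err_Suc
    by (rule order_trans[OF vnorm_inf_matrix_vector_mult_le])
       (simp add: B_le mult_left_le_one_le vnorm_inf_nonneg mnorm_inf_nonneg)
  have err_Suc_Suc_le: "vnorm_inf (x (t + 2) - m) \<le> q * vnorm_inf (x t - m)" for t
    using vnorm_inf_matrix_vector_mult_le[of "B ** B" "x t - m"]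
    by (simp add: q_def err_Suc matrix_vector_mul_assoc)
  show ?thesis
    unfolding q_def[symmetric]
  proof (induction t rule: nat_induct2)
    case 1 then show ?case using err_Suc_le[of 0] by simp
  next
    case (step t)
    have "vnorm_inf (x (t + 2) - m) \<le> q * (q ^ (t div 2) * vnorm_inf (x 0 - m))"
      using err_Suc_Suc_le[of t] mult_left_mono[OF step.IH] mnorm_inf_nonneg
      unfolding q_def by (meson order_trans)
    then show ?case by (simp add: mult.assoc)
  qed simp
qed

lemma affine_fixed_point_bound:
  fixes B :: "real^'n^'n"
  assumes fixed: "m = c + B *v m"
    and B_le: "mnorm_inf B \<le> 1" and B2_less: "mnorm_inf (B ** B) < 1"
  shows "vnorm_inf m \<le> 2 * vnorm_inf c / (1 - mnorm_inf (B ** B))"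
proof -
  define q where "q = mnorm_inf (B ** B)"
  have "m = c + B *v c + (B ** B) *v m"
    using fixed by (metis add.assoc matrix_vector_mul_assoc matrix_vector_right_distrib)
  then have "vnorm_inf m \<le> vnorm_inf c + vnorm_inf (B *v c) + vnorm_inf ((B ** B) *v m)"
    by (metis vnorm_inf_add_le add_right_mono order_trans)
  also have "\<dots> \<le> 2 * vnorm_inf c + q * vnorm_inf m"
    using vnorm_inf_matrix_vector_mult_le[of B c] vnorm_inf_matrix_vector_mult_le[of "B ** B" m]
      mult_right_mono[OF B_le vnorm_inf_nonneg[of c]]
    unfolding q_def by linarith
  finally have "(1 - q) * vnorm_inf m \<le> 2 * vnorm_inf c"
    by (simp add: algebra_simps)
  then show ?thesis
    using B2_less unfolding q_def by (simp add: field_simps)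
qed

lemma diag_mat_mult_nth: "(diag_mat a ** W) $ i $ j = a $ i * W $ i $ j"
  by (simp add: diag_mat_def matrix_matrix_mult_def if_distrib[of "\<lambda>z. z * _"] cong: if_cong)

lemma diag_mat_mult_vector_nth: "(diag_mat a *v x) $ i = a $ i * x $ i"
  by (simp add: diag_mat_def matrix_vector_mult_def if_distrib[of "\<lambda>z. z * _"] cong: if_cong)

lemma one_minus_diag_mat_mult_vector_nth: "((mat 1 - diag_mat a) *v x) $ i = (1 - a $ i) * x $ i"
  by (simp add: matrix_vector_mult_diff_rdistrib diag_mat_mult_vector_nth algebra_simps)


lemma contractor_network_alpha_bounds:
  assumes "contractor_network E W r \<alpha>"
  shows "0 \<le> \<alpha> $ i" "\<alpha> $ i \<le> 1"
  using assms unfolding contractor_network_def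
  by (metis less_eq_real_def order_refl zero_le_one)+

lemma contractor_network_weight_nonneg:
  assumes "contractor_network E W r \<alpha>"
  shows "0 \<le> W $ i $ j"
  using assms unfolding contractor_network_def by (metis order_refl less_imp_le)

lemma contractor_network_row_sum:
  assumes net: "contractor_network E W r \<alpha>"
  shows "(\<Sum>j\<in>UNIV. \<bar>(diag_mat \<alpha> ** W) $ i $ j\<bar>) = \<alpha> $ i"
proof (cases "\<exists>j. (j, i) \<in> E")
  case True
  then have "(\<Sum>j\<in>UNIV. W $ i $ j) = 1"
    using net unfolding contractor_network_def by blast
  then show ?thesis
    using contractor_network_alpha_bounds[OF net] contractor_network_weight_nonneg[OF net]
    by (simp add: diag_mat_mult_nth abs_mult sum_distrib_left[symmetric])
next
  case False
  then have "\<alpha> $ i = 0"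
    using net unfolding contractor_network_def by blast
  then show ?thesis
    by (simp add: diag_mat_mult_nth)
qed

lemma contractor_network_mnorm_le_1:
  assumes "contractor_network E W r \<alpha>"
  shows "mnorm_inf (diag_mat \<alpha> ** W) \<le> 1"
  by (rule mnorm_inf_le)
     (simp add: contractor_network_row_sum[OF assms] contractor_network_alpha_bounds[OF assms])

text \<open>A single step need not contract, since a pure obligee has \<open>\<alpha>\<^sub>i = 1\<close>.\<close>
lemma contractor_network_mnorm_square_less_1:
  assumes net: "contractor_network E W r \<alpha>"
  defines "B \<equiv> diag_mat \<alpha> ** W"
  shows "mnorm_inf (B ** B) < 1"
proof (rule mnorm_inf_less)
  fix i
  have B_nonneg: "0 \<le> B $ i $ j" for i j
    using contractor_network_alpha_bounds[OF net] contractor_network_weight_nonneg[OF net]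
    by (simp add: B_def diag_mat_mult_nth)
  have "(\<Sum>j\<in>UNIV. \<bar>(B ** B) $ i $ j\<bar>) = (\<Sum>j\<in>UNIV. \<Sum>k\<in>UNIV. B $ i $ k * B $ k $ j)"
    using B_nonneg by (simp add: matrix_matrix_mult_def sum_nonneg)
  also have "\<dots> = (\<Sum>k\<in>UNIV. B $ i $ k * (\<Sum>j\<in>UNIV. \<bar>B $ k $ j\<bar>))"
    using B_nonneg by (subst sum.swap) (simp add: sum_distrib_left)
  also have "\<dots> = (\<Sum>k\<in>UNIV. \<alpha> $ i * (W $ i $ k * \<alpha> $ k))"
    by (simp only: B_def contractor_network_row_sum[OF net]) (simp add: diag_mat_mult_nth mult.assoc)
  also have "\<dots> < 1"
  proof (cases "\<exists>k. (i, k) \<in> E")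
    case True
    then have "\<alpha> $ i < 1"
      using net unfolding contractor_network_def by (metis zero_less_one)
    have "(\<Sum>k\<in>UNIV. \<alpha> $ i * (W $ i $ k * \<alpha> $ k)) \<le> (\<Sum>k\<in>UNIV. \<bar>B $ i $ k\<bar>)"
      using B_nonneg contractor_network_alpha_bounds[OF net] contractor_network_weight_nonneg[OF net]
      by (intro sum_mono) (simp add: B_def diag_mat_mult_nth mult_left_le mult_left_mono)
    also have "\<dots> = \<alpha> $ i"
      unfolding B_def by (rule contractor_network_row_sum[OF net])
    finally show ?thesis using \<open>\<alpha> $ i < 1\<close> by linarith
  next
    case False
    then have "\<alpha> $ i = 1"
      using net unfolding contractor_network_def by blast
    obtain j where ji: "(j, i) \<in> E"
      using False net unfolding contractor_network_def by blast
    then have "\<alpha> $ j < 1" "0 < W $ i $ j" "(\<Sum>k\<in>UNIV. W $ i $ k) = 1"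
      using net unfolding contractor_network_def by (metis zero_less_one)+
    have "(\<Sum>k\<in>UNIV. \<alpha> $ i * (W $ i $ k * \<alpha> $ k)) < (\<Sum>k\<in>UNIV. W $ i $ k)"
    proof (rule sum_strict_mono_ex1)
      show "\<forall>k\<in>UNIV. \<alpha> $ i * (W $ i $ k * \<alpha> $ k) \<le> W $ i $ k"
        using contractor_network_alpha_bounds[OF net] contractor_network_weight_nonneg[OF net]
        by (simp add: \<open>\<alpha> $ i = 1\<close> mult_left_le)
      show "\<exists>k\<in>UNIV. \<alpha> $ i * (W $ i $ k * \<alpha> $ k) < W $ i $ k"
        proof
        show "\<alpha> $ i * (W $ i $ j * \<alpha> $ j) < W $ i $ j"
          using \<open>\<alpha> $ j < 1\<close> \<open>0 < W $ i $ j\<close> by (simp add: \<open>\<alpha> $ i = 1\<close>)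
      qed simp
    qed simp
    then show ?thesis
      using \<open>(\<Sum>k\<in>UNIV. W $ i $ k) = 1\<close> by simp
  qed
  finally show "(\<Sum>j\<in>UNIV. \<bar>(B ** B) $ i $ j\<bar>) < 1" .
qed

lemma contractor_network_input_bound:
  assumes "contractor_network E W r \<alpha>"
  shows "vnorm_inf ((mat 1 - diag_mat \<alpha>) *v r) \<le> vnorm_inf r"
proof (rule vnorm_inf_le)
  fix i
  have "\<bar>((mat 1 - diag_mat \<alpha>) *v r) $ i\<bar> = (1 - \<alpha> $ i) * \<bar>r $ i\<bar>"
    using contractor_network_alpha_bounds[OF assms, of i]
    by (simp add: one_minus_diag_mat_mult_vector_nth abs_mult)
  also have "\<dots> \<le> \<bar>r $ i\<bar>"
    using contractor_network_alpha_bounds[OF assms, of i] by (simp add: mult_left_le_one_le)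
  finally show "\<bar>((mat 1 - diag_mat \<alpha>) *v r) $ i\<bar> \<le> vnorm_inf r"
    using vnorm_inf_ge order_trans by blast
qed

lemma is_dpath_edge: "(j, i) \<in> E \<Longrightarrow> is_dpath E [j, i]"
  unfolding is_dpath_def by (auto simp: less_Suc_eq)

lemma is_dpath_snoc:
  assumes "is_dpath E p" "(last p, i) \<in> E"
  shows "is_dpath E (p @ [i])"
  unfolding is_dpath_def
proof (intro conjI allI impI)
  fix k
  assume k: "Suc k < length (p @ [i])"
  show "((p @ [i]) ! k, (p @ [i]) ! Suc k) \<in> E"
  proof (cases "Suc k < length p")
    case True
    then show ?thesis using assms(1) unfolding is_dpath_def by (simp add: nth_append)
  next
    case False
    then have "k = length p - 1" using k by simp
    then show ?thesis
      using assms False unfolding is_dpath_def by (simp add: nth_append last_conv_nth)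
  qed
qed simp

lemma is_dpath_nth_trancl:
  assumes "is_dpath E p" "a < b" "b < length p"
  shows "(p ! a, p ! b) \<in> E\<^sup>+"
  using assms(2,3)
proof (induction b)
  case (Suc b)
  have "(p ! b, p ! Suc b) \<in> E"
    using assms(1) Suc.prems unfolding is_dpath_def by blast
  then show ?case
    using Suc by (cases "a = b") (auto intro: trancl_into_trancl)
qed simp

lemma acyclic_graph_dpath_distinct:
  assumes "acyclic_graph E" "is_dpath E p"
  shows "distinct p"
proof -
  have "p ! a \<noteq> p ! b" if "a < b" "b < length p" for a b
    using is_dpath_nth_trancl[OF assms(2) that] assms(1) unfolding acyclic_graph_def by metis
  then show ?thesis
    unfolding distinct_conv_nth by (metis linorder_neqE_nat)
qed

lemma acyclic_graph_dpath_length_le_max_path_edges: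
  assumes "acyclic_graph E" "is_dpath E (p :: 'n::finite list)"
  shows "length p \<le> Suc (max_path_edges E)"
proof -
  have "length q \<le> CARD('n)" if "is_dpath E q" for q :: "'n list"
    using distinct_card[OF acyclic_graph_dpath_distinct[OF assms(1) that]]
      card_mono[of UNIV "set q"] by simp
  then have "{length q - 1 | q. is_dpath E q} \<subseteq> {..CARD('n)}"
    by force
  then have "finite {length q - 1 | q. is_dpath E q}"
    using finite_subset by blast
  then have "length p - 1 \<le> max_path_edges E"
    unfolding max_path_edges_def using assms(2) by (intro Max_ge) auto
  then show ?thesis by simp
qed

lemma affine_iteration_stable_at:
  fixes B :: "real^'n^'n"
  assumes x_Suc: "\<And>t. x (Suc t) = c + B *v x t"
    and support: "\<And>i j. B $ i $ j \<noteq> 0 \<Longrightarrow> (j, i) \<in> E"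
    and source: "\<And>i. \<nexists>j. (j, i) \<in> E \<Longrightarrow> x 0 $ i = c $ i"
    and paths: "\<And>p. is_dpath E p \<Longrightarrow> last p = i \<Longrightarrow> length p \<le> Suc k"
    and "k \<le> t"
  shows "x (Suc t) $ i = x t $ i"
  using paths \<open>k \<le> t\<close>
proof (induction k arbitrary: i t)
  have x_Suc_nth: "x (Suc t) $ i = c $ i + (\<Sum>j\<in>UNIV. B $ i $ j * x t $ j)" for i t
    by (simp add: x_Suc matrix_vector_mult_def)
  {
    case 0
    then have "\<nexists>j. (j, i) \<in> E"
      using is_dpath_edge by fastforce
    then have "B $ i $ j = 0" for j
      using support by blast
    then have "x (Suc s) $ i = c $ i" for s
      by (simp add: x_Suc_nth)
    then show ?case
      using source[OF \<open>\<nexists>j. (j, i) \<in> E\<close>] by (cases t) auto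
  next
    case (Suc k)
    obtain s where s: "t = Suc s" "k \<le> s"
      using Suc.prems(2) by (cases t) auto
    have "B $ i $ j * x (Suc s) $ j = B $ i $ j * x s $ j" for j
    proof (cases "B $ i $ j = 0")
      case False
      then have "(j, i) \<in> E" by (rule support)
      then have "length p \<le> Suc k" if "is_dpath E p" "last p = j" for p
        using Suc.prems(1)[OF is_dpath_snoc[of E p i]] that by simp
      then show ?thesis
        using Suc.IH s(2) by simp
    qed simp
    then show ?case
      unfolding s(1) x_Suc_nth[of "Suc s" i] x_Suc_nth[of s i]
      by (metis (mono_tags, lifting) sum.cong)
  }
qed

lemma mean_fail_error_bound:
  assumes net: "contractor_network E W r \<alpha>"
  defines "A \<equiv> diag_mat \<alpha>"
  defines "m \<equiv> matrix_inv (mat 1 - A ** W) *v ((mat 1 - A) *v r)"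
  defines "q \<equiv> mnorm_inf ((A ** W) ** (A ** W))"
  shows "vnorm_inf (mean_fail A W r t - m) \<le> (1 + 2 / (1 - q)) * vnorm_inf r * q ^ (t div 2)"
proof -
  define c where "c = (mat 1 - A) *v r"
  have B_le: "mnorm_inf (A ** W) \<le> 1" and q_less: "q < 1"
    using contractor_network_mnorm_le_1[OF net] contractor_network_mnorm_square_less_1[OF net]
    by (simp_all add: A_def q_def)
  have fixed: "m = c + (A ** W) *v m"
    using affine_fixed_point invertible_one_minus_if_mnorm_inf_square_less_1 q_less
    unfolding m_def c_def q_def by blast
  have "vnorm_inf m \<le> 2 * vnorm_inf c / (1 - q)"
    using affine_fixed_point_bound[OF fixed B_le] q_less unfolding q_def by blast
  also have "\<dots> \<le> 2 * vnorm_inf r / (1 - q)"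
    using contractor_network_input_bound[OF net] q_less by (simp add: A_def c_def divide_right_mono)
  finally have err_0: "vnorm_inf (mean_fail A W r 0 - m) \<le> (1 + 2 / (1 - q)) * vnorm_inf r"
    using vnorm_inf_diff_le[of r m] by (simp add: algebra_simps)
  have "vnorm_inf (mean_fail A W r t - m) \<le> q ^ (t div 2) * vnorm_inf (mean_fail A W r 0 - m)"
    using affine_iteration_error_bound[where x = "mean_fail A W r", OF _ fixed B_le]
    unfolding q_def c_def by simp
  also have "\<dots> \<le> q ^ (t div 2) * ((1 + 2 / (1 - q)) * vnorm_inf r)"
    by (rule mult_left_mono[OF err_0]) (simp add: q_def mnorm_inf_nonneg)
  finally show ?thesis
    by (simp add: ac_simps)
qed


lemma mean_fail_eventually_fixed:
  assumes net: "contractor_network E W r \<alpha>" and "acyclic_graph E"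
    and "max_path_edges E \<le> t"
  defines "A \<equiv> diag_mat \<alpha>"
  defines "m \<equiv> matrix_inv (mat 1 - A ** W) *v ((mat 1 - A) *v r)"
  shows "mean_fail A W r t = m"
  using \<open>max_path_edges E \<le> t\<close>
proof (induction t rule: dec_induct)
  define x where "x = mean_fail A W r"
  have x_Suc: "x (Suc t) = (mat 1 - A) *v r + (A ** W) *v x t" for t
    by (simp add: x_def)
  have stable: "x (Suc t) = x t" if t: "max_path_edges E \<le> t" for t
  proof (rule vec_eq_iff[THEN iffD2], rule allI)
    fix i
    show "x (Suc t) $ i = x t $ i"
    proof (rule affine_iteration_stable_at[where k = "max_path_edges E" and E = E])
      show "x (Suc t) = (mat 1 - A) *v r + (A ** W) *v x t" for t
        by (rule x_Suc)
      show "(j, i) \<in> E" if "(A ** W) $ i $ j \<noteq> 0" for i j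
        using that net unfolding contractor_network_def by (auto simp: A_def diag_mat_mult_nth)
      show "x 0 $ i = ((mat 1 - A) *v r) $ i" if "\<nexists>j. (j, i) \<in> E" for i
        using that net unfolding contractor_network_def
        by (simp add: x_def A_def one_minus_diag_mat_mult_vector_nth)
      show "length p \<le> Suc (max_path_edges E)" if "is_dpath E p" for p
        using acyclic_graph_dpath_length_le_max_path_edges[OF \<open>acyclic_graph E\<close> that] .
    qed (rule t)
  qed
  {
    case base
    have "invertible (mat 1 - A ** W)"
      using invertible_one_minus_if_mnorm_inf_square_less_1
        contractor_network_mnorm_square_less_1[OF net] by (simp add: A_def)
    moreover have "x (max_path_edges E) = (mat 1 - A) *v r + (A ** W) *v x (max_path_edges E)"
      using stable[of "max_path_edges E"] x_Suc by simp
    ultimately show ?case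
      unfolding m_def x_def[symmetric] by (simp add: affine_fixed_point)
  next
    case (step n)
    then show ?case
      using stable[of n] unfolding x_def by metis
  }
qed

theorem mainTheorem5:
  fixes E :: "('n::finite \<times> 'n) set" and W :: "real ^ 'n ^ 'n"
    and r \<alpha> :: "real ^ 'n"
  assumes "contractor_network E W r \<alpha>"
  defines "A \<equiv> diag_mat \<alpha>"
  defines "m \<equiv> matrix_inv (mat 1 - A ** W) *v ((mat 1 - A) *v r)"
  shows "(\<forall>t\<ge>2. vnorm_inf (mean_fail A W r t - m)
            \<le> (1 + 2 / (1 - mnorm_inf ((A ** W) ** (A ** W)))) * vnorm_inf r
               * mnorm_inf ((A ** W) ** (A ** W)) ^ (t div 2))
       \<and> (\<forall>d. acyclic_graph E \<longrightarrow> d = max_path_edges E \<longrightarrow> d > 0 \<longrightarrow>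
            (\<forall>t\<ge>d. \<forall>i. mean_fail A W r t $ i = m $ i))"
  using mean_fail_error_bound[OF assms(1)] mean_fail_eventually_fixed[OF assms(1)]
  unfolding A_def m_def by auto

end
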